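(* For every real $t>0$, $$\lim_{n \to \infty} \sum_{k=0}^{n} N_{0,n-k}(k+t) = \frac{2}{3}.$$
   Context: $N_{0,m}$ denotes the uniform B-spline of degree $m$ with knots $0,1,\ldots,m+1$ and support $[0,m+1]$: $N_{0,0}(t)=\chi_{[0,1]}(t)$ (the indicator of $[0,1]$) and $N_{0,m}(t)=\int_{t-1}^{t}N_{0,m-1}(x)\,dx$ for $m\ge1$; i.e. $N_{0,m}$ is the $(m+1)$-fold convolution of $\chi_{[0,1]}$ with itself. *)

theory Defs
  imports "HOL-Analysis.Analysis"
begin

text \<open>Uniform B-spline N_{0,m} of degree m with knots 0,1,...,m+1:
  N_{0,0} is the indicator of [0,1], and
  N_{0,m}(t) = integral over [t-1,t] of N_{0,m-1}.\<close>

fun bspline :: "nat \<Rightarrow> real \<Rightarrow> real" where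
  "bspline 0 t = indicator {0..1} t"
| "bspline (Suc m) t = integral {t - 1..t} (bspline m)"

end

theory Submission
  imports Defs
begin

(* Reversing the sum, a_n = \<Sum>_{j \<le> n} N_{0,j}(n+t-j) differs from V(n+t), where
   V(x) = \<Sum>_j N_{0,j}(x-j), only by finitely many terms N_{0,j}(s) with s < t fixed and j > n;
   these are bounded by s^j/j! and vanish.  Since N_{0,j+1}(x) = \<integral>_{x-1}^{x} N_{0,j}, V solves the
   renewal equation V(x) = \<integral>_{x-2}^{x-1} V for x > 1, with V = 0 on (-\<infinity>,0) and V = 1 on [0,1].
   For any solution g of this equation, bounds lo \<le> g \<le> hi on [a-2,a] persist for all later
   times, and a Doeblin-type minorisation shrinks hi - lo by the factor 1023/1024 after 6 units of
   time, so g converges.  The weighted mass \<integral>_{X-2}^{X} min(1, y-X+2) g(y) dy does not depend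
   on X; it is 1 for V at X = 1 and 3L/2 for the limit L, whence L = 2/3. *)

lemma integral_interval_diff:
  fixes f :: "real \<Rightarrow> real"
  assumes "f integrable_on {c..b}" "c \<le> a" "a \<le> b"
  shows "integral {c..b} f - integral {c..a} f = integral {a..b} f"
  using Henstock_Kurzweil_Integration.integral_combine[OF assms(2,3,1)] by simp

lemma isCont_integral_from:
  fixes f :: "real \<Rightarrow> real"
  assumes "\<And>u v. f integrable_on {u..v}" and "c < x"
  shows "isCont (\<lambda>v. integral {c..v} f) x"
proof -
  have "continuous_on {c..x+1} (\<lambda>v. integral {c..v} f)"
    using assms(1) by (rule indefinite_integral_continuous_1)
  then show ?thesis
    by (rule continuous_on_interior) (use assms(2) in simp)
qed

lemma integral_from_has_real_derivative:
  fixes f :: "real \<Rightarrow> real"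
  assumes "\<And>b. continuous_on {c..b} f" and "c < x"
  shows "((\<lambda>v. integral {c..v} f) has_real_derivative f x) (at x)"
proof -
  have "((\<lambda>v. integral {c..v} f) has_real_derivative f x) (at x within {c..x+1})"
    using assms by (intro integral_has_real_derivative) auto
  moreover have "at x within {c..x+1} = at x"
    by (rule at_within_interior) (use assms(2) in simp)
  ultimately show ?thesis by simp
qed

lemma isCont_integral_unit_window:
  fixes f :: "real \<Rightarrow> real"
  assumes f: "\<And>u v. f integrable_on {u..v}"
  shows "isCont (\<lambda>x. integral {x-1..x} f) x0"
proof -
  define c where "c = x0 - 2"
  have window: "\<forall>\<^sub>F x in nhds x0. integral {c..x} f - integral {c..x-1} f = integral {x-1..x} f"
    unfolding eventually_nhds
    by (rule exI[of _ "{x0-1<..}"]) (auto simp: c_def intro!: integral_interval_diff f)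
  have "isCont (\<lambda>x. integral {c..x} f - integral {c..x-1} f) x0"
    by (intro continuous_intros isCont_integral_from[OF f]
          isCont_o2[where f="\<lambda>x. x - 1", OF _ isCont_integral_from[OF f]]) (auto simp: c_def)
  then show ?thesis
    using isCont_cong[OF window] by simp
qed

lemma bspline_integrable: "bspline m integrable_on {a..b}"
proof (induction m arbitrary: a b)
  case 0
  have "{0..1::real} \<inter> {a..b} = {max 0 a..min 1 b}" by auto
  then show ?case by (simp add: integrable_on_indicator)
next
  case (Suc m)
  have "bspline (Suc m) = (\<lambda>x. integral {x-1..x} (bspline m))"
    by (rule ext) simp
  then have "isCont (bspline (Suc m)) x" for x
    using isCont_integral_unit_window[OF Suc.IH] by simp
  then show ?case
    by (meson continuous_at_imp_continuous_on integrable_continuous_real)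
qed

lemma bspline_eq_0_neg: "x < 0 \<Longrightarrow> bspline m x = 0"
proof (induction m arbitrary: x)
  case (Suc m)
  have "integral {x-1..x} (bspline m) = integral {x-1..x} (\<lambda>_. 0)"
    by (rule integral_cong) (use Suc in auto)
  then show ?case by simp
qed simp

lemma bspline_Suc_eq_0_nonpos:
  assumes "x \<le> 0" shows "bspline (Suc m) x = 0"
proof -
  have "integral {x-1..x} (bspline m) = integral {x-1..x} (\<lambda>_. 0)"
    by (rule integral_spike[where S="{0}"]) (use assms in \<open>auto simp: bspline_eq_0_neg\<close>)
  then show ?thesis by simp
qed

lemma bspline_nonneg: "0 \<le> bspline m x"
proof (induction m arbitrary: x)
  case (Suc m)
  show ?case
    using integral_nonneg[OF bspline_integrable Suc.IH] by simp
qed simp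

lemma bspline_Suc_le_integral_from_0:
  assumes "0 \<le> s"
  shows "bspline (Suc m) s \<le> integral {0..s} (bspline m)"
proof -
  define l where "l = min (s - 1) 0"
  have "bspline (Suc m) s \<le> integral {l..s} (bspline m)"
    unfolding bspline.simps
    by (rule integral_subset_le) (auto simp: l_def bspline_integrable bspline_nonneg)
  also have "\<dots> = integral {l..0} (bspline m) + integral {0..s} (bspline m)"
    by (rule Henstock_Kurzweil_Integration.integral_combine[symmetric])
      (use assms in \<open>auto simp: l_def bspline_integrable\<close>)
  also have "integral {l..0} (bspline m) = integral {l..0} (\<lambda>_. 0)"
    by (rule integral_spike[where S="{0}"]) (auto simp: bspline_eq_0_neg)
  finally show ?thesis by simp
qed

lemma power_over_fact_has_integral:
  fixes s :: real
  assumes "0 \<le> s"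
  shows "((\<lambda>r. r ^ m / fact m) has_integral s ^ Suc m / fact (Suc m)) {0..s}"
proof -
  have "((\<lambda>r. r ^ Suc m / fact (Suc m)) has_real_derivative x ^ m / fact m) (at x within {0..s})"
    for x :: real
    using DERIV_cdivide[OF DERIV_pow[of "Suc m" x "{0..s}"], of "fact (Suc m)"]
    by (simp add: fact_Suc divide_simps)
  then show ?thesis
    using fundamental_theorem_of_calculus[OF assms, of "\<lambda>r. r ^ Suc m / fact (Suc m)"]
    by (simp add: has_real_derivative_iff_has_vector_derivative)
qed

lemma bspline_le_power_over_fact: "0 \<le> s \<Longrightarrow> bspline m s \<le> s ^ m / fact m"
proof (induction m arbitrary: s)
  case 0
  then show ?case by (simp add: indicator_def)
next
  case (Suc m)
  have "bspline (Suc m) s \<le> integral {0..s} (bspline m)"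
    using Suc.prems by (rule bspline_Suc_le_integral_from_0)
  also have "\<dots> \<le> integral {0..s} (\<lambda>r. r ^ m / fact m)"
  proof (rule integral_le[OF bspline_integrable])
    show "(\<lambda>r. r ^ m / fact m) integrable_on {0..s}"
      using power_over_fact_has_integral[OF Suc.prems] by blast
  qed (simp add: Suc.IH)
  also have "\<dots> = s ^ Suc m / fact (Suc m)"
    using power_over_fact_has_integral[OF Suc.prems] by (rule integral_unique)
  finally show ?case .
qed

lemma bspline_tendsto_0: "(\<lambda>m. bspline m s) \<longlonglongrightarrow> 0"
proof (cases "s < 0")
  case True
  then show ?thesis by (simp add: bspline_eq_0_neg)
next
  case False
  have "(\<lambda>m. s ^ m /\<^sub>R fact m) \<longlonglongrightarrow> 0"
    by (rule summable_LIMSEQ_zero[OF summable_exp_generic])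
  then have "(\<lambda>m. s ^ m / fact m) \<longlonglongrightarrow> 0"
    by (simp add: divide_inverse_commute)
  moreover have "bspline m s \<le> s ^ m / fact m" for m
    using False by (simp add: bspline_le_power_over_fact)
  ultimately show ?thesis
    by (auto intro: tendsto_sandwich[of "\<lambda>_. 0" _ _ "\<lambda>m. s ^ m / fact m"] simp: bspline_nonneg)
qed

definition renewal_beyond :: "real \<Rightarrow> (real \<Rightarrow> real) \<Rightarrow> bool" where
  "renewal_beyond a g \<longleftrightarrow>
     (\<forall>u v. g integrable_on {u..v}) \<and> (\<forall>x>a. g x = integral {x-2..x-1} g)"

lemma renewal_beyond_integrable: "renewal_beyond a g \<Longrightarrow> g integrable_on {u..v}"
  by (simp add: renewal_beyond_def)

lemma renewal_beyond_eq: "renewal_beyond a g \<Longrightarrow> a < x \<Longrightarrow> g x = integral {x-2..x-1} g"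
  by (simp add: renewal_beyond_def)

lemma renewal_beyond_mono: "renewal_beyond a g \<Longrightarrow> a \<le> b \<Longrightarrow> renewal_beyond b g"
  by (simp add: renewal_beyond_def)

lemma renewal_beyond_affine:
  assumes "renewal_beyond a g"
  shows "renewal_beyond a (\<lambda>y. \<alpha> * g y + \<beta>)"
proof -
  have g: "g integrable_on {u..v}" for u v
    using assms by (rule renewal_beyond_integrable)
  have scaled: "(\<lambda>y. \<alpha> * g y) integrable_on {u..v}" for u v
    using integrable_cmul[OF g, of \<alpha>] by simp
  have "integral {x-2..x-1} (\<lambda>y. \<alpha> * g y + \<beta>) = \<alpha> * integral {x-2..x-1} g + \<beta>" for x
    using g scaled by (subst integral_add) auto
  moreover have "(\<lambda>y. \<alpha> * g y + \<beta>) integrable_on {u..v}" for u v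
    by (rule integrable_add[OF scaled integrable_const_ivl])
  ultimately show ?thesis
    unfolding renewal_beyond_def using renewal_beyond_eq[OF assms] by simp
qed

lemma renewal_beyond_nonneg:
  assumes R: "renewal_beyond a g" and init: "\<And>y. y \<in> {a-2..a} \<Longrightarrow> 0 \<le> g y"
    and "a - 2 \<le> y"
  shows "0 \<le> g y"
proof -
  have "\<forall>y\<in>{a-2..a + real n}. 0 \<le> g y" for n
  proof (induction n)
    case 0
    then show ?case using init by simp
  next
    case (Suc n)
    have "0 \<le> g y" if y: "y \<in> {a + real n<..a + real (Suc n)}" for y
    proof -
      have "0 \<le> integral {y-2..y-1} g"
        by (rule integral_nonneg[OF renewal_beyond_integrable[OF R]]) (use Suc.IH y in auto)
      also have "\<dots> = g y"
        using y by (intro renewal_beyond_eq[OF R, symmetric]) auto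
      finally show ?thesis .
    qed
    with Suc.IH show ?case
      by (metis atLeastAtMost_iff greaterThanAtMost_iff not_le)
  qed
  moreover have "y \<le> a + real (nat \<lceil>y - a\<rceil>)"
    by linarith
  ultimately show ?thesis
    using assms(3) by auto
qed

lemma renewal_window_integral_le:
  assumes R: "renewal_beyond a g" and nonneg: "\<And>y. a - 2 \<le> y \<Longrightarrow> 0 \<le> g y"
    and "a < x" "x - 2 \<le> u" "u \<le> v" "v \<le> x - 1"
  shows "integral {u..v} g \<le> g x"
proof -
  have "integral {u..v} g \<le> integral {x-2..x-1} g"
    using assms by (intro integral_subset_le renewal_beyond_integrable[OF R] ballI nonneg) auto
  also have "\<dots> = g x"
    using assms(3) by (rule renewal_beyond_eq[OF R, symmetric])
  finally show ?thesis .
qed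

lemma renewal_lower_bound_spreads:
  assumes R: "renewal_beyond a g" and nonneg: "\<And>y. a - 2 \<le> y \<Longrightarrow> 0 \<le> g y"
    and "0 \<le> c" and lower: "\<And>y. y \<in> {p..q} \<Longrightarrow> c \<le> g y" and "a - 1 \<le> p"
    and "0 < h" "h \<le> q - p" "h \<le> 1" and y: "y \<in> {p+1+h..q+2-h}"
  shows "c * h \<le> g y"
proof -
  define p' where "p' = max (y-2) p"
  define q' where "q' = min (y-1) q"
  have h: "h \<le> q' - p'"
    using assms unfolding p'_def q'_def by auto
  have "c * h \<le> c * (q' - p')"
    using h \<open>0 \<le> c\<close> by (rule mult_left_mono)
  also have "\<dots> = integral {p'..q'} (\<lambda>_. c)"
    using h \<open>0 < h\<close> by simp
  also have "\<dots> \<le> integral {p'..q'} g"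
    by (rule integral_le[OF integrable_const_ivl renewal_beyond_integrable[OF R]])
      (auto simp: p'_def q'_def intro: lower)
  also have "\<dots> \<le> g y"
    using assms h by (intro renewal_window_integral_le[OF R nonneg]) (auto simp: p'_def q'_def)
  finally show ?thesis .
qed

lemma renewal_lower_bound_spreads_thrice:
  assumes R: "renewal_beyond a g" and nonneg: "\<And>y. a - 2 \<le> y \<Longrightarrow> 0 \<le> g y"
    and "0 \<le> c" and lower: "\<And>y. y \<in> {p..p+1/4} \<Longrightarrow> c \<le> g y" and "a - 1 \<le> p"
    and y: "y \<in> {p+27/8..p+47/8}"
  shows "c / 512 \<le> g y"
proof -
  have "c / 8 \<le> g y" if "y \<in> {p+9/8..p+17/8}" for y
    using renewal_lower_bound_spreads[OF R nonneg, of c p "p+1/4" "1/8" y] assms that by auto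
  then have "c / 64 \<le> g y" if "y \<in> {p+9/4..p+4}" for y
    using renewal_lower_bound_spreads[OF R nonneg, of "c/8" "p+9/8" "p+17/8" "1/8" y] assms that
    by auto
  then show ?thesis
    using renewal_lower_bound_spreads[OF R nonneg, of "c/64" "p+9/4" "p+4" "1/8" y] assms
    by auto
qed

lemma renewal_doeblin:
  assumes R: "renewal_beyond a g" and init: "\<And>y. y \<in> {a-2..a} \<Longrightarrow> 0 \<le> g y"
    and y: "y \<in> {a+4..a+6}"
  shows "integral {a-3/2..a-1/2} g / 1024 \<le> g y"
proof -
  have nonneg: "0 \<le> g y" if "a - 2 \<le> y" for y
    using R init that by (rule renewal_beyond_nonneg)
  have g: "g integrable_on {u..v}" for u v
    using R by (rule renewal_beyond_integrable)
  define P where "P = integral {a-3/2..a-1} g"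
  define Q where "Q = integral {a-1..a-1/2} g"
  have "0 \<le> P" "0 \<le> Q"
    unfolding P_def Q_def by (auto intro!: integral_nonneg g nonneg)
  have "P / 512 \<le> g y"
  proof (rule renewal_lower_bound_spreads_thrice[OF R nonneg \<open>0 \<le> P\<close>])
    show "P \<le> g z" if "z \<in> {a+1/4..a+1/4+1/4}" for z
      unfolding P_def using that by (intro renewal_window_integral_le[OF R nonneg]) auto
  qed (use y in auto)
  moreover have "Q / 512 \<le> g y"
  proof (rule renewal_lower_bound_spreads_thrice[OF R nonneg \<open>0 \<le> Q\<close>])
    show "Q \<le> g z" if "z \<in> {a+1/2..a+1/2+1/4}" for z
      unfolding Q_def using that by (intro renewal_window_integral_le[OF R nonneg]) auto
  qed (use y in auto)
  moreover have "P + Q = integral {a-3/2..a-1/2} g"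
    unfolding P_def Q_def by (rule Henstock_Kurzweil_Integration.integral_combine) (auto intro: g)
  ultimately show ?thesis
    by linarith
qed

lemma renewal_lower_bound_improves:
  assumes R: "renewal_beyond a g" and lower: "\<And>y. y \<in> {a-2..a} \<Longrightarrow> lo \<le> g y"
    and "a + 4 \<le> y"
  shows "lo + (integral {a-3/2..a-1/2} g - lo) / 1024 \<le> g y"
proof -
  define lo' where "lo' = lo + (integral {a-3/2..a-1/2} g - lo) / 1024"
  have R': "renewal_beyond a (\<lambda>y. 1 * g y + - lo)"
    using R by (rule renewal_beyond_affine)
  have integral_shifted:
    "integral {a-3/2..a-1/2} (\<lambda>y. 1 * g y + - lo) = integral {a-3/2..a-1/2} g - lo"
    using renewal_beyond_integrable[OF R] by (subst integral_add) auto
  have init: "0 \<le> 1 * g y + - lo'" if "y \<in> {(a+6)-2..a+6}" for y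
  proof -
    have "integral {a-3/2..a-1/2} (\<lambda>y. 1 * g y + - lo) / 1024 \<le> 1 * g y + - lo"
      using lower that by (intro renewal_doeblin[OF R']) auto
    then have "(integral {a-3/2..a-1/2} g - lo) / 1024 \<le> g y - lo"
      unfolding integral_shifted by simp
    then show ?thesis
      unfolding lo'_def by linarith
  qed
  have "renewal_beyond (a + 6) (\<lambda>y. 1 * g y + - lo')"
    using renewal_beyond_affine[OF R] by (rule renewal_beyond_mono) simp
  then have "0 \<le> 1 * g y + - lo'"
    by (rule renewal_beyond_nonneg) (use init assms(3) in auto)
  then show ?thesis
    by (simp add: lo'_def)
qed

lemma renewal_oscillation_contracts:
  assumes R: "renewal_beyond a g"
    and bounds: "\<And>y. y \<in> {a-2..a} \<Longrightarrow> lo \<le> g y \<and> g y \<le> hi"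
  obtains lo' hi' where "hi' - lo' = 1023/1024 * (hi - lo)"
    and "\<And>y. a + 4 \<le> y \<Longrightarrow> lo' \<le> g y \<and> g y \<le> hi'"
proof
  define A where "A = integral {a-3/2..a-1/2} g"
  show "(hi - (hi - A) / 1024) - (lo + (A - lo) / 1024) = 1023/1024 * (hi - lo)"
    by (simp add: field_simps)
  fix y assume y: "a + 4 \<le> y"
  show "lo + (A - lo) / 1024 \<le> g y \<and> g y \<le> hi - (hi - A) / 1024"
  proof
    show "lo + (A - lo) / 1024 \<le> g y"
      unfolding A_def using bounds by (intro renewal_lower_bound_improves[OF R _ y]) auto
    have "- hi + (integral {a-3/2..a-1/2} (\<lambda>y. -1 * g y + 0) - - hi) / 1024 \<le> -1 * g y + 0"
      using bounds by (intro renewal_lower_bound_improves[OF renewal_beyond_affine[OF R] _ y]) auto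
    then show "g y \<le> hi - (hi - A) / 1024"
      by (simp add: A_def)
  qed
qed

lemma renewal_oscillation_decays:
  assumes R: "renewal_beyond a g"
    and bounds: "\<And>y. y \<in> {a-2..a} \<Longrightarrow> lo \<le> g y \<and> g y \<le> hi"
  shows "\<exists>lo' hi'. hi' - lo' = (1023/1024) ^ k * (hi - lo) \<and>
           (\<forall>y \<ge> a - 2 + 6 * real k. lo' \<le> g y \<and> g y \<le> hi')"
proof (induction k)
  case 0
  have "0 \<le> 1 * g y + - lo" if "a - 2 \<le> y" for y
    using renewal_beyond_nonneg[OF renewal_beyond_affine[OF R, of 1 "- lo"]] bounds that by force
  moreover have "0 \<le> -1 * g y + hi" if "a - 2 \<le> y" for y
    using renewal_beyond_nonneg[OF renewal_beyond_affine[OF R, of "-1" hi]] bounds that by force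
  ultimately show ?case
    by force
next
  case (Suc k)
  then obtain lo' hi' where width: "hi' - lo' = (1023/1024) ^ k * (hi - lo)"
    and bounds': "\<And>y. a - 2 + 6 * real k \<le> y \<Longrightarrow> lo' \<le> g y \<and> g y \<le> hi'"
    by blast
  have "renewal_beyond (a + 6 * real k) g"
    using R by (rule renewal_beyond_mono) simp
  then obtain lo'' hi'' where "hi'' - lo'' = 1023/1024 * (hi' - lo')"
    and "\<And>y. a + 6 * real k + 4 \<le> y \<Longrightarrow> lo'' \<le> g y \<and> g y \<le> hi''"
    using bounds' by (rule renewal_oscillation_contracts) auto
  then show ?case
    using width by (intro exI[of _ lo''] exI[of _ hi'']) (auto simp: algebra_simps)
qed

(* By Fubini this is \<integral>_{X-2}^{X} min(1, y-X+2) g(y) dy, which equals 3L/2 for g = L. *)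
definition renewal_mass :: "(real \<Rightarrow> real) \<Rightarrow> real \<Rightarrow> real" where
  "renewal_mass g X = integral {X-1..X} g + integral {X-2..X-1} (\<lambda>s. integral {s..X-1} g)"

lemma renewal_mass_antiderivative_form:
  fixes g :: "real \<Rightarrow> real"
  assumes g: "\<And>u v. g integrable_on {u..v}" and "c \<le> X - 2"
  defines "G \<equiv> \<lambda>x. integral {c..x} g"
  shows "renewal_mass g X = G X - integral {c..X-1} G + integral {c..X-2} G"
proof -
  have G_integrable: "G integrable_on {u..v}" if "c \<le> u" for u v
  proof (rule integrable_continuous_real)
    show "continuous_on {u..v} G"
      unfolding G_def using indefinite_integral_continuous_1[OF g]
      by (rule continuous_on_subset) (use that in auto)
  qed
  have "integral {X-2..X-1} (\<lambda>s. integral {s..X-1} g) = integral {X-2..X-1} (\<lambda>s. G (X-1) - G s)"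
    unfolding G_def using assms(2) by (intro integral_cong integral_interval_diff[symmetric] g) auto
  also have "\<dots> = G (X-1) - integral {X-2..X-1} G"
    using G_integrable assms(2) by (subst integral_diff) auto
  also have "integral {X-2..X-1} G = integral {c..X-1} G - integral {c..X-2} G"
    using G_integrable assms(2) by (intro integral_interval_diff[symmetric]) auto
  moreover have "integral {X-1..X} g = G X - G (X-1)"
    unfolding G_def using assms(2) by (intro integral_interval_diff[symmetric] g) auto
  ultimately show ?thesis
    unfolding renewal_mass_def by simp
qed

lemma has_integral_delayed_difference:
  fixes G :: "real \<Rightarrow> real"
  assumes G: "\<And>b. continuous_on {c..b} G" and "c < a - 2" "a \<le> X"
  defines "K \<equiv> \<lambda>x. integral {c..x} G"
  shows "((\<lambda>y. G (y - 1) - G (y - 2)) has_integral (K (X-1) - K (X-2)) - (K (a-1) - K (a-2))) {a..X}"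
proof (rule fundamental_theorem_of_calculus)
  have K_delayed: "((\<lambda>y. K (y - d)) has_real_derivative G (y - d)) (at y)" if "c < y - d" for y d
  proof -
    have "(K has_real_derivative G (y - d)) (at (y - d))"
      unfolding K_def using G that by (rule integral_from_has_real_derivative)
    moreover have "((\<lambda>y. y - d) has_real_derivative 1) (at y)"
      by (auto intro!: derivative_eq_intros)
    ultimately show ?thesis
      using DERIV_chain2[where g="\<lambda>y. y - d"] by fastforce
  qed
  fix y assume "y \<in> {a..X}"
  then have "((\<lambda>y. K (y - 1) - K (y - 2)) has_real_derivative G (y - 1) - G (y - 2)) (at y)"
    using assms(2) by (intro DERIV_diff K_delayed) auto
  then show "((\<lambda>y. K (y - 1) - K (y - 2)) has_vector_derivative G (y - 1) - G (y - 2))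
      (at y within {a..X})"
    by (simp add: has_real_derivative_iff_has_vector_derivative has_vector_derivative_at_within)
qed (use assms in auto)

lemma renewal_mass_const:
  assumes R: "renewal_beyond a g" and "a \<le> X"
  shows "renewal_mass g X = renewal_mass g a"
proof -
  define c where "c = a - 3"
  define G where "G = (\<lambda>x. integral {c..x} g)"
  define K where "K = (\<lambda>x. integral {c..x} G)"
  have g: "g integrable_on {u..v}" for u v
    using R by (rule renewal_beyond_integrable)
  have "integral {a..X} g = integral {a..X} (\<lambda>y. G (y - 1) - G (y - 2))"
  proof (rule integral_spike[where S="{a}"])
    fix y assume "y \<in> {a..X} - {a}"
    then show "G (y - 1) - G (y - 2) = g y"
      unfolding G_def using renewal_beyond_eq[OF R]
      by (simp add: integral_interval_diff[OF g] c_def)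
  qed simp
  also have "\<dots> = K (X-1) - K (X-2) - (K (a-1) - K (a-2))"
    unfolding K_def using indefinite_integral_continuous_1[OF g] assms(2)
    by (intro integral_unique has_integral_delayed_difference) (auto simp: G_def c_def)
  finally have "G X - G a = K (X-1) - K (X-2) - (K (a-1) - K (a-2))"
    using integral_interval_diff[OF g, of c a X] assms(2) by (simp add: G_def c_def)
  moreover have "renewal_mass g Y = G Y - K (Y-1) + K (Y-2)" if "a \<le> Y" for Y
    unfolding G_def K_def using that by (intro renewal_mass_antiderivative_form g) (simp add: c_def)
  ultimately show ?thesis
    using assms(2) by simp
qed

lemma renewal_mass_lower_bound:
  fixes g :: "real \<Rightarrow> real"
  assumes g: "\<And>u v. g integrable_on {u..v}" and lower: "\<And>y. y \<in> {X-2..X} \<Longrightarrow> lo \<le> g y"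
  shows "3/2 * lo \<le> renewal_mass g X"
proof -
  have "lo = integral {X-1..X} (\<lambda>_. lo)"
    by simp
  also have "\<dots> \<le> integral {X-1..X} g"
    using lower by (intro integral_le g) auto
  finally have outer: "lo \<le> integral {X-1..X} g" .
  have linear: "((\<lambda>s. lo * (X - 1 - s)) has_integral lo / 2) {X-2..X-1}"
  proof -
    have "((\<lambda>s. - lo * (X - 1 - s)^2 / 2) has_real_derivative lo * (X - 1 - s)) (at s within {X-2..X-1})"
      for s
      by (auto intro!: derivative_eq_intros simp: power2_eq_square field_simps)
    then show ?thesis
      using fundamental_theorem_of_calculus[of "X-2" "X-1" "\<lambda>s. - lo * (X - 1 - s)^2 / 2"]
      by (simp add: has_real_derivative_iff_has_vector_derivative)
  qed
  have inner: "lo * (X - 1 - s) \<le> integral {s..X-1} g" if "s \<in> {X-2..X-1}" for s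
  proof -
    have "lo * (X - 1 - s) = integral {s..X-1} (\<lambda>_. lo)"
      using that by simp
    also have "\<dots> \<le> integral {s..X-1} g"
      using lower that by (intro integral_le g) auto
    finally show ?thesis .
  qed
  have "lo / 2 \<le> integral {X-2..X-1} (\<lambda>s. integral {s..X-1} g)"
  proof -
    have "continuous_on {X-2..X-1} (\<lambda>s. integral {s..X-1} g)"
      by (rule indefinite_integral_continuous_1'[OF g])
    then have "(\<lambda>s. integral {s..X-1} g) integrable_on {X-2..X-1}"
      by (rule integrable_continuous_real)
    then have "integral {X-2..X-1} (\<lambda>s. lo * (X - 1 - s))
        \<le> integral {X-2..X-1} (\<lambda>s. integral {s..X-1} g)"
      using linear by (intro integral_le inner) blast+
    then show ?thesis
      using integral_unique[OF linear] by linarith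
  qed
  with outer show ?thesis
    unfolding renewal_mass_def by linarith
qed

lemma renewal_mass_uminus: "renewal_mass (\<lambda>y. - g y) X = - renewal_mass g X"
  by (simp add: renewal_mass_def)

lemma renewal_mass_bounds:
  fixes g :: "real \<Rightarrow> real"
  assumes g: "\<And>u v. g integrable_on {u..v}"
    and bounds: "\<And>y. y \<in> {X-2..X} \<Longrightarrow> lo \<le> g y \<and> g y \<le> hi"
  shows "3/2 * lo \<le> renewal_mass g X" "renewal_mass g X \<le> 3/2 * hi"
proof -
  show "3/2 * lo \<le> renewal_mass g X"
    using bounds by (intro renewal_mass_lower_bound g) auto
  have "3/2 * - hi \<le> renewal_mass (\<lambda>y. - g y) X"
    using bounds by (intro renewal_mass_lower_bound integrable_neg g) auto
  then show "renewal_mass g X \<le> 3/2 * hi"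
    by (simp add: renewal_mass_uminus)
qed

lemma renewal_tendsto:
  assumes R: "renewal_beyond a g"
    and bounds: "\<And>y. y \<in> {a-2..a} \<Longrightarrow> lo \<le> g y \<and> g y \<le> hi"
  shows "(g \<longlongrightarrow> 2/3 * renewal_mass g a) at_top"
proof (rule tendstoI)
  fix e :: real assume "0 < e"
  have "lo \<le> hi"
    using bounds[of a] by auto
  obtain k where k: "(1023/1024) ^ k < e / (hi - lo + 1)"
    using real_arch_pow_inv[of "e / (hi - lo + 1)" "1023/1024"] \<open>0 < e\<close> \<open>lo \<le> hi\<close> by auto
  obtain lo' hi' where width: "hi' - lo' = (1023/1024) ^ k * (hi - lo)"
    and bounds': "\<And>y. a - 2 + 6 * real k \<le> y \<Longrightarrow> lo' \<le> g y \<and> g y \<le> hi'"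
    using renewal_oscillation_decays[OF R bounds] by blast
  have "(1023/1024) ^ k * (hi - lo) \<le> (1023/1024) ^ k * (hi - lo + 1)"
    by (intro mult_left_mono) auto
  also have "\<dots> < e"
    using k \<open>lo \<le> hi\<close> by (simp add: pos_less_divide_eq)
  finally have small: "(1023/1024) ^ k * (hi - lo) < e" .
  define X where "X = a + 6 * real k"
  have "renewal_mass g a = renewal_mass g X"
    unfolding X_def by (rule renewal_mass_const[OF R, symmetric]) simp
  moreover have "y \<in> {X-2..X} \<Longrightarrow> lo' \<le> g y \<and> g y \<le> hi'" for y
    using bounds' by (simp add: X_def)
  then have "3/2 * lo' \<le> renewal_mass g X" "renewal_mass g X \<le> 3/2 * hi'"
    using renewal_mass_bounds[OF renewal_beyond_integrable[OF R]] by blast+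
  ultimately have "\<bar>g y - 2/3 * renewal_mass g a\<bar> < e" if "a - 2 + 6 * real k \<le> y" for y
    using bounds'[OF that] width small by linarith
  then show "\<forall>\<^sub>F y in at_top. dist (g y) (2/3 * renewal_mass g a) < e"
    unfolding dist_real_def eventually_at_top_linorder by blast
qed

(* V(x) = \<Sum>_{j \<ge> 0} N_{0,j}(x-j); the terms with j > x vanish. *)
definition bspline_series :: "real \<Rightarrow> real" where
  "bspline_series x = (\<Sum>j<nat \<lfloor>x\<rfloor> + 1. bspline j (x - real j))"

lemma bspline_series_eq_sum:
  assumes "x < real N"
  shows "bspline_series x = (\<Sum>j<N. bspline j (x - real j))"
proof -
  have truncate: "(\<Sum>j<M. bspline j (x - real j)) = (\<Sum>j<K. bspline j (x - real j))"
    if "x < real K" "K \<le> M" for K M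
    by (rule sum.mono_neutral_right) (use that in \<open>auto intro!: bspline_eq_0_neg\<close>)
  have floor: "x < real (nat \<lfloor>x\<rfloor> + 1)"
    by linarith
  consider "N \<le> nat \<lfloor>x\<rfloor> + 1" | "nat \<lfloor>x\<rfloor> + 1 \<le> N"
    by linarith
  then show ?thesis
  proof cases
    case 1
    then show ?thesis
      unfolding bspline_series_def by (rule truncate[OF assms])
  next
    case 2
    then show ?thesis
      unfolding bspline_series_def by (rule truncate[OF floor, symmetric])
  qed
qed

lemma bspline_series_eq_0_neg: "x < 0 \<Longrightarrow> bspline_series x = 0"
  using bspline_series_eq_sum[of x 0] by simp

lemma bspline_series_eq_1: "0 \<le> x \<Longrightarrow> x \<le> 1 \<Longrightarrow> bspline_series x = 1"
  using bspline_series_eq_sum[of x 2] bspline_Suc_eq_0_nonpos[of "x - 1" 0]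
  by (simp add: numeral_2_eq_2)

lemma bspline_shifted_integrable: "(\<lambda>y. bspline j (y - real j)) integrable_on {u..v}"
  using integrable_shift_real_ivl[OF bspline_integrable[of j "u - real j" "v - real j"], where c="- real j"]
  by simp

lemma bspline_series_renewal: "renewal_beyond 1 bspline_series"
  unfolding renewal_beyond_def
proof (intro conjI allI impI)
  fix u v :: real
  define N where "N = nat \<lfloor>v\<rfloor> + 1"
  have N: "v < real N"
    unfolding N_def by linarith
  have "(\<lambda>y. \<Sum>j<N. bspline j (y - real j)) integrable_on {u..v}"
    by (intro integrable_sum bspline_shifted_integrable) simp
  then show "bspline_series integrable_on {u..v}"
    by (rule integrable_eq) (use N in \<open>auto intro!: bspline_series_eq_sum[symmetric]\<close>)
next
  fix x :: real assume "1 < x"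
  define M where "M = nat \<lfloor>x\<rfloor>"
  have M: "x - 1 < real M" "x < real (Suc M)"
    unfolding M_def by linarith+
  have "bspline_series x = (\<Sum>j<Suc M. bspline j (x - real j))"
    using M(2) by (rule bspline_series_eq_sum)
  also have "\<dots> = (\<Sum>j<M. bspline (Suc j) (x - real (Suc j)))"
    using \<open>1 < x\<close> by (subst sum.lessThan_Suc_shift) (simp add: indicator_def)
  also have "\<dots> = (\<Sum>j<M. integral {x-2..x-1} (\<lambda>y. bspline j (y - real j)))"
  proof (rule sum.cong[OF refl])
    fix j
    have "bspline (Suc j) (x - real (Suc j)) = integral {(x-2) - real j..(x-1) - real j} (bspline j)"
      by (simp add: algebra_simps)
    also have "\<dots> = integral {x-2..x-1} (\<lambda>y. bspline j (y - real j))"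
      using integral_shift_real_ivl[of "x-2" "real j" "x-1" "\<lambda>y. bspline j (y - real j)"] by simp
    finally show "bspline (Suc j) (x - real (Suc j)) = integral {x-2..x-1} (\<lambda>y. bspline j (y - real j))" .
  qed
  also have "\<dots> = integral {x-2..x-1} (\<lambda>y. \<Sum>j<M. bspline j (y - real j))"
    by (rule integral_sum[symmetric]) (auto intro: bspline_shifted_integrable)
  also have "\<dots> = integral {x-2..x-1} bspline_series"
    by (rule integral_cong) (use M in \<open>auto intro!: bspline_series_eq_sum[symmetric]\<close>)
  finally show "bspline_series x = integral {x-2..x-1} bspline_series" .
qed

lemma renewal_mass_bspline_series: "renewal_mass bspline_series 1 = 1"
proof -
  have "integral {0..1} bspline_series = integral {0..1::real} (\<lambda>_. 1)"
    by (rule integral_cong) (simp add: bspline_series_eq_1)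
  moreover have "integral {s..0} bspline_series = 0" for s
  proof -
    have "integral {s..0} bspline_series = integral {s..0} (\<lambda>_. 0)"
      by (rule integral_spike[where S="{0}"]) (auto simp: bspline_series_eq_0_neg)
    then show ?thesis by simp
  qed
  ultimately show ?thesis
    by (simp add: renewal_mass_def)
qed

lemma bspline_series_tendsto: "(bspline_series \<longlongrightarrow> 2/3) at_top"
proof -
  have "0 \<le> bspline_series y \<and> bspline_series y \<le> 1" if "y \<in> {1-2..1}" for y
    using that bspline_series_eq_0_neg[of y] bspline_series_eq_1[of y] by (cases "y < 0") auto
  from renewal_tendsto[OF bspline_series_renewal this] show ?thesis
    by (simp add: renewal_mass_bspline_series)
qed

lemma bspline_antidiagonal_sum_eq:
  "(\<Sum>k=0..n. bspline (n - k) (real k + t))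
     = bspline_series (real n + t) - (\<Sum>i<nat \<lceil>t\<rceil>. bspline (Suc n + i) (t - 1 - real i))"
proof -
  define f where "f j = bspline j (real n + t - real j)" for j
  have "(\<Sum>k=0..n. bspline (n - k) (real k + t))
      = (\<Sum>j=0..n. bspline (n - (n + 0 - j)) (real (n + 0 - j) + t))"
    by (rule sum.atLeastAtMost_rev)
  also have "\<dots> = (\<Sum>j<Suc n. f j)"
    by (auto simp: f_def of_nat_diff algebra_simps atLeast0AtMost lessThan_Suc_atMost intro!: sum.cong)
  finally have antidiagonal: "(\<Sum>k=0..n. bspline (n - k) (real k + t)) = (\<Sum>j<Suc n. f j)" .
  have "(\<Sum>j<Suc n + T. f j) = (\<Sum>j<Suc n. f j) + (\<Sum>i<T. f (Suc n + i))" for T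
    by (induction T) (simp_all add: add_ac)
  moreover have "bspline_series (real n + t) = (\<Sum>j<Suc n + nat \<lceil>t\<rceil>. f j)"
    unfolding f_def by (rule bspline_series_eq_sum) linarith
  moreover have "f (Suc n + i) = bspline (Suc n + i) (t - 1 - real i)" for i
    unfolding f_def by (simp add: algebra_simps del: bspline.simps)
  ultimately show ?thesis
    using antidiagonal by simp
qed

theorem mainTheorem14:
  fixes t :: real
  assumes "t > 0"
  shows "(\<lambda>n. \<Sum>k=0..n. bspline (n - k) (real k + t)) \<longlonglongrightarrow> 2 / 3"
proof -
  have "filterlim (\<lambda>n. real n + t) at_top sequentially"
    using filterlim_tendsto_add_at_top[OF tendsto_const filterlim_real_sequentially, of t]
    by (simp add: add.commute)
  with bspline_series_tendsto have "(\<lambda>n. bspline_series (real n + t)) \<longlonglongrightarrow> 2/3"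
    by (rule filterlim_compose)
  moreover have "(\<lambda>n. \<Sum>i<nat \<lceil>t\<rceil>. bspline (Suc n + i) (t - 1 - real i)) \<longlonglongrightarrow> 0"
  proof (rule tendsto_null_sum)
    fix i
    show "(\<lambda>n. bspline (Suc n + i) (t - 1 - real i)) \<longlonglongrightarrow> 0"
      using LIMSEQ_ignore_initial_segment[OF bspline_tendsto_0[of "t - 1 - real i"], of "Suc i"]
      by (simp add: add_ac)
  qed
  ultimately show ?thesis
    unfolding bspline_antidiagonal_sum_eq using tendsto_diff by fastforce
qed

end
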